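(* Let $s\geq2$. Define $f_s:\mathrm{Aut}_{s-1}(H)\to k^{\mathbb{Z}}$ by $f_s(\phi)=(\beta_n)_{n\in\mathbb{Z}}$, where $\phi(x^ny^s)=x^ny^s+\beta_n(x^{n+s}-x^n)$ for all $n\in\mathbb{Z}$. Then $f_s$ is a group epimorphism onto the additive group $k^{\mathbb{Z}}$, and $1\to\mathrm{Aut}_s(H)\hookrightarrow\mathrm{Aut}_{s-1}(H)\xrightarrow{f_s}k^{\mathbb{Z}}\to0$ is an exact sequence of groups.
   Context: Let $k$ be a field and $0\neq q\in k$ not a root of unity. $H=k_q[x,x^{-1},y]$ is the $k$-algebra generated by $x,x^{-1},y$ with $xx^{-1}=x^{-1}x=1$, $yx=qxy$, a Hopf algebra with $\Delta(x)=x\otimes x$, $\Delta(y)=y\otimes x+1\otimes y$, $\varepsilon(x)=1$, $\varepsilon(y)=0$; $\{x^ny^m:n\in\mathbb{Z},m\in\mathbb{N}\}$ is a $k$-basis. Let $H_0=\mathrm{span}\{x^n\}$, $H(m)=H_0y^m$. $\mathrm{Aut}_c(H)$ is the group under composition of coalgebra automorphisms of $H$, and for $m\geq1$, $\mathrm{Aut}_m(H)=\{\phi\in\mathrm{Aut}_c(H):\phi(h)=h\text{ for all }h\in\sum_{i=0}^mH(i)\}$. $k^{\mathbb{Z}}$ is the group of sequences in $k$ under componentwise addition. It is a fact (proved in the paper) that for every $\phi\in\mathrm{Aut}_{s-1}(H)$ there is a unique $(\beta_n)_{n\in\mathbb{Z}}\in k^{\mathbb{Z}}$ with $\phi(x^ny^s)=x^ny^s+\beta_n(x^{n+s}-x^n)$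 for all $n$, so $f_s$ is well defined. *)

theory Defs
  imports "HOL-Library.Poly_Mapping" "HOL-Algebra.Algebra"
begin

text \<open>The quantum plane Hopf algebra H = k_q[x,x^{-1},y], represented as finitely
supported functions on its basis: the pair (n,m) stands for x^n y^m.\<close>

type_synonym 'k hopfH = "(int \<times> nat) \<Rightarrow>\<^sub>0 'k"
type_synonym 'k hopfHH = "((int \<times> nat) \<times> (int \<times> nat)) \<Rightarrow>\<^sub>0 'k"

definition mon :: "int \<Rightarrow> nat \<Rightarrow> 'k::field hopfH" where
  "mon n m = Poly_Mapping.single (n, m) 1"

definition smul :: "'k::field \<Rightarrow> ('a \<Rightarrow>\<^sub>0 'k) \<Rightarrow> ('a \<Rightarrow>\<^sub>0 'k)" where
  "smul c v = (\<Sum>p\<in>Poly_Mapping.keys v. Poly_Mapping.single p (c * Poly_Mapping.lookup v p))"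

definition k_linear :: "(('a \<Rightarrow>\<^sub>0 'k::field) \<Rightarrow> ('b \<Rightarrow>\<^sub>0 'k)) \<Rightarrow> bool" where
  "k_linear f \<longleftrightarrow> (\<forall>u v. f (u + v) = f u + f v) \<and> (\<forall>c v. f (smul c v) = smul c (f v))"

definition tens :: "'k::field hopfH \<Rightarrow> 'k hopfH \<Rightarrow> 'k hopfHH" where
  "tens a b = (\<Sum>p\<in>Poly_Mapping.keys a. \<Sum>r\<in>Poly_Mapping.keys b. Poly_Mapping.single (p, r) (Poly_Mapping.lookup a p * Poly_Mapping.lookup b r))"

text \<open>Product of basis elements in H: (x^a y^b)(x^c y^d) = q^(bc) x^(a+c) y^(b+d),
  since y x = q x y.\<close>
definition bcoef :: "'k::field \<Rightarrow> int \<times> nat \<Rightarrow> int \<times> nat \<Rightarrow> 'k" where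
  "bcoef q p r = q powi (int (snd p) * fst r)"

definition bprod :: "int \<times> nat \<Rightarrow> int \<times> nat \<Rightarrow> int \<times> nat" where
  "bprod p r = (fst p + fst r, snd p + snd r)"

definition tmul :: "'k::field \<Rightarrow> 'k hopfHH \<Rightarrow> 'k hopfHH \<Rightarrow> 'k hopfHH" where
  "tmul q t u = (\<Sum>p\<in>Poly_Mapping.keys t. \<Sum>r\<in>Poly_Mapping.keys u.
     Poly_Mapping.single (bprod (fst p) (fst r), bprod (snd p) (snd r))
       (Poly_Mapping.lookup t p * Poly_Mapping.lookup u r * bcoef q (fst p) (fst r) * bcoef q (snd p) (snd r)))"

primrec tpow :: "'k::field \<Rightarrow> 'k hopfHH \<Rightarrow> nat \<Rightarrow> 'k hopfHH" where
  "tpow q t 0 = Poly_Mapping.single ((0, 0), (0, 0)) 1"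
| "tpow q t (Suc m) = tmul q (tpow q t m) t"

text \<open>\<Delta>(y) = y \<otimes> x + 1 \<otimes> y\<close>
definition comul_y :: "'k::field hopfHH" where
  "comul_y = Poly_Mapping.single ((0, 1), (1, 0)) 1 + Poly_Mapping.single ((0, 0), (0, 1)) 1"

text \<open>\<Delta>(x^n y^m) = \<Delta>(x)^n \<Delta>(y)^m, with \<Delta>(x)^n = x^n \<otimes> x^n (\<Delta> is an algebra map)\<close>
definition comul_basis :: "'k::field \<Rightarrow> int \<times> nat \<Rightarrow> 'k hopfHH" where
  "comul_basis q p = tmul q (Poly_Mapping.single ((fst p, 0), (fst p, 0)) 1) (tpow q comul_y (snd p))"

definition comul :: "'k::field \<Rightarrow> 'k hopfH \<Rightarrow> 'k hopfHH" where
  "comul q v = (\<Sum>p\<in>Poly_Mapping.keys v. smul (Poly_Mapping.lookup v p) (comul_basis q p))"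

definition counit :: "'k::field hopfH \<Rightarrow> 'k" where
  "counit v = (\<Sum>p\<in>Poly_Mapping.keys v. if snd p = 0 then Poly_Mapping.lookup v p else 0)"

definition tensor_map :: "('k::field hopfH \<Rightarrow> 'k hopfH) \<Rightarrow> ('k hopfH \<Rightarrow> 'k hopfH) \<Rightarrow> 'k hopfHH \<Rightarrow> 'k hopfHH" where
  "tensor_map f g t = (\<Sum>pr\<in>Poly_Mapping.keys t. smul (Poly_Mapping.lookup t pr)
      (tens (f (Poly_Mapping.single (fst pr) 1)) (g (Poly_Mapping.single (snd pr) 1))))"

definition Aut_c :: "'k::field \<Rightarrow> ('k hopfH \<Rightarrow> 'k hopfH) set" where
  "Aut_c q = {\<phi>. k_linear \<phi> \<and> bij \<phi> \<and>
      (\<forall>v. comul q (\<phi> v) = tensor_map \<phi> \<phi> (comul q v)) \<and>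
      (\<forall>v. counit (\<phi> v) = counit v)}"

definition AutG :: "'k::field \<Rightarrow> ('k hopfH \<Rightarrow> 'k hopfH) monoid" where
  "AutG q = \<lparr>carrier = Aut_c q, monoid.mult = (\<circ>), one = id\<rparr>"

definition Hle :: "nat \<Rightarrow> 'k::field hopfH set" where
  "Hle m = {h. \<forall>p\<in>Poly_Mapping.keys h. snd p \<le> m}"

definition Aut_m :: "'k::field \<Rightarrow> nat \<Rightarrow> ('k hopfH \<Rightarrow> 'k hopfH) set" where
  "Aut_m q m = {\<phi>\<in>Aut_c q. \<forall>h\<in>Hle m. \<phi> h = h}"

definition seqG :: "(int \<Rightarrow> 'k::field) monoid" where
  "seqG = \<lparr>carrier = UNIV, monoid.mult = (\<lambda>a b n. a n + b n), one = (\<lambda>n. 0)\<rparr>"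

definition f_s :: "nat \<Rightarrow> ('k::field hopfH \<Rightarrow> 'k hopfH) \<Rightarrow> (int \<Rightarrow> 'k)" where
  "f_s s \<phi> = (\<lambda>n. THE \<beta>. \<phi> (mon n s) = mon n s + smul \<beta> (mon (n + int s) 0 - mon n 0))"

end

theory Submission
  imports Defs
begin

text \<open>
  An automorphism \<open>\<phi>\<close> fixing \<open>H(0) + \<dots> + H(s - 1)\<close> also fixes \<open>x\<^sup>n\<^sup>+\<^sup>s - x\<^sup>n\<close>, so \<open>f\<^sub>s\<close> is additive,
  and its kernel consists of the maps that also fix every \<open>x\<^sup>ny\<^sup>s\<close>, i.e. \<open>Aut\<^sub>s(H)\<close>.
  The normal form of \<open>\<phi>(x\<^sup>ny\<^sup>s)\<close> comes from comparing coefficients in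
  \<open>\<Delta>(\<phi>(x\<^sup>ny\<^sup>s)) = (\<phi> \<otimes> \<phi>)(\<Delta>(x\<^sup>ny\<^sup>s))\<close>, where all middle terms of \<open>\<Delta>(x\<^sup>ny\<^sup>s)\<close> are fixed and
  the q-integers \<open>[c]\<^sub>q\<close> are nonzero because q is not a root of unity.

  For surjectivity, rescale the basis to \<open>e\<^sub>a\<^sub>,\<^sub>b = x\<^sup>ay\<^sup>b\<^sup>-\<^sup>a / [b - a]\<^sub>q!\<close>: then H is the incidence
  coalgebra of \<open>(\<int>, \<le>)\<close>, and conjugating by an invertible upper triangular matrix is a
  coalgebra automorphism. Taking the matrix \<open>1 + \<gamma> E\<^sub>s\<close>, with \<open>E\<^sub>s\<close> the shift by s and \<open>\<gamma>\<close>
  such that \<open>(\<gamma> E\<^sub>s)\<^sup>2 = 0\<close>, gives an element of \<open>Aut\<^sub>s\<^sub>-\<^sub>1(H)\<close> with \<open>f\<^sub>s\<close>-value \<open>[s]\<^sub>q! \<gamma>\<close>,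
  and every sequence is a sum of two such \<open>\<gamma>\<close>.
\<close>

abbreviation keys where "keys \<equiv> Poly_Mapping.keys"
abbreviation lookup where "lookup \<equiv> Poly_Mapping.lookup"
abbreviation single where "single \<equiv> Poly_Mapping.single"

lemma lookup_smul [simp]: "lookup (smul c v) x = c * lookup v x"
proof -
  have "lookup (smul c v) x = (\<Sum>p\<in>keys v. if p = x then c * lookup v p else 0)"
    unfolding smul_def lookup_sum lookup_single when_def by (intro sum.cong) auto
  also have "\<dots> = c * lookup v x"
    by (cases "x \<in> keys v") (auto simp: in_keys_iff)
  finally show ?thesis .
qed

lemma smul_one [simp]: "smul 1 v = v"
  by (rule poly_mapping_eqI) simp

lemma smul_zero_left [simp]: "smul 0 v = 0"
  by (rule poly_mapping_eqI) simp

lemma smul_add_left: "smul (a + b) v = smul a v + smul b v"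
  by (rule poly_mapping_eqI) (simp add: lookup_add distrib_right)

lemma single_eq_smul: "single p c = smul c (single p (1::'k::field))"
  by (rule poly_mapping_eqI) (simp add: lookup_single when_def)

lemma poly_mapping_sum_singles: "v = (\<Sum>p\<in>keys v. single p (lookup v p))"
  by (rule poly_mapping_eqI) (simp add: lookup_sum lookup_single when_def
      sum.delta'[where S="keys v"] in_keys_iff cong: if_cong)

lemma sum_keys_superset:
  assumes "finite A" "keys v \<subseteq> A"
  shows "(\<Sum>p\<in>keys v. lookup v p * (g p::'k::field)) = (\<Sum>p\<in>A. lookup v p * g p)"
  by (rule sum.mono_neutral_left) (use assms in \<open>auto simp: in_keys_iff\<close>)

lemma sum_atMost_split_ends:
  assumes "1 \<le> (s::nat)"
  shows "sum f {..s} = f 0 + f s + sum f {1..<s}"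
proof -
  have "{..s} = insert 0 (insert s {1..<s})" using assms by auto
  then show ?thesis using assms by (simp add: add.assoc)
qed

lemma sum_atMost_shift_delta:
  "(\<Sum>i\<le>m. if n + int i = x then f i else 0) = (if n \<le> x \<and> x \<le> n + int m then f (nat (x - n)) else 0)"
proof -
  have "(\<Sum>i\<le>m. if n + int i = x then f i else 0) = (\<Sum>i\<le>m. if i = nat (x - n) \<and> n \<le> x then f i else 0)"
    by (intro sum.cong refl) auto
  also have "\<dots> = (if n \<le> x \<and> x \<le> n + int m then f (nat (x - n)) else 0)"
    by (cases "n \<le> x") auto
  finally show ?thesis .
qed

definition lin_ext :: "('a \<Rightarrow> ('b \<Rightarrow>\<^sub>0 'k::field)) \<Rightarrow> ('a \<Rightarrow>\<^sub>0 'k) \<Rightarrow> ('b \<Rightarrow>\<^sub>0 'k)" where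
  "lin_ext B v = (\<Sum>p\<in>keys v. smul (lookup v p) (B p))"

lemma lookup_lin_ext: "lookup (lin_ext B v) x = (\<Sum>p\<in>keys v. lookup v p * lookup (B p) x)"
  unfolding lin_ext_def lookup_sum by simp

lemma lookup_lin_ext_superset: "finite A \<Longrightarrow> keys v \<subseteq> A \<Longrightarrow>
   lookup (lin_ext B v) x = (\<Sum>p\<in>A. lookup v p * lookup (B p) x)"
  unfolding lookup_lin_ext by (rule sum_keys_superset)

lemma lin_ext_add: "lin_ext B (u + v) = lin_ext B u + lin_ext B v"
proof (rule poly_mapping_eqI)
  fix x
  let ?A = "keys u \<union> keys v"
  have "keys (u + v) \<subseteq> ?A" by (rule keys_add)
  then show "lookup (lin_ext B (u + v)) x = lookup (lin_ext B u + lin_ext B v) x"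
    unfolding lookup_add
    by (subst (1 2 3) lookup_lin_ext_superset[of ?A]) (auto simp: lookup_add distrib_right sum.distrib)
qed

lemma lin_ext_smul: "lin_ext B (smul c v) = smul c (lin_ext B v)"
proof (rule poly_mapping_eqI)
  fix x
  have "keys (smul c v) \<subseteq> keys v" by (auto simp: in_keys_iff)
  from lookup_lin_ext_superset[OF finite_keys this, of B x]
  show "lookup (lin_ext B (smul c v)) x = lookup (smul c (lin_ext B v)) x"
    by (simp add: lookup_lin_ext sum_distrib_left mult.assoc)
qed

lemma lin_ext_single: "lin_ext B (single p c) = smul c (B p)"
  by (rule poly_mapping_eqI) (simp add: lookup_lin_ext_superset[of "{p}"] lookup_single)

lemma lin_ext_single_one: "lin_ext (\<lambda>p. single p 1) v = v"
proof (rule poly_mapping_eqI)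
  fix k
  have "lookup (lin_ext (\<lambda>p. single p 1) v) k = (\<Sum>p\<in>keys v. if p = k then lookup v p else 0)"
    by (simp add: lookup_lin_ext lookup_single when_def if_distrib cong: if_cong)
  also have "\<dots> = lookup v k" by (cases "k \<in> keys v") (auto simp: in_keys_iff)
  finally show "lookup (lin_ext (\<lambda>p. single p 1) v) k = lookup v k" .
qed

lemma k_linear_lin_ext: "k_linear (lin_ext B)"
  unfolding k_linear_def by (simp add: lin_ext_add lin_ext_smul)

lemma k_linear_zero: "k_linear f \<Longrightarrow> f 0 = 0"
  unfolding k_linear_def by (metis add_cancel_right_right)

lemma k_linear_sum: "k_linear f \<Longrightarrow> f (sum g A) = (\<Sum>a\<in>A. f (g a))"
  by (induction A rule: infinite_finite_induct) (auto simp: k_linear_zero k_linear_def)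

lemma k_linear_comp: "k_linear f \<Longrightarrow> k_linear g \<Longrightarrow> k_linear (f \<circ> g)"
  by (simp add: k_linear_def)

lemma k_linear_eq_lin_ext:
  assumes "k_linear f"
  shows "f = lin_ext (\<lambda>p. f (single p 1))"
proof
  fix v
  have "f v = f (\<Sum>p\<in>keys v. smul (lookup v p) (single p 1))"
    by (subst poly_mapping_sum_singles) (simp add: single_eq_smul[symmetric])
  also have "\<dots> = lin_ext (\<lambda>p. f (single p 1)) v"
    using assms by (simp add: k_linear_sum lin_ext_def k_linear_def)
  finally show "f v = lin_ext (\<lambda>p. f (single p 1)) v" .
qed

lemma k_linear_comp_lin_ext: "k_linear h \<Longrightarrow> h (lin_ext B v) = lin_ext (h \<circ> B) v"
  unfolding lin_ext_def by (simp add: k_linear_sum k_linear_def)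

lemma lookup_k_linear:
  "k_linear f \<Longrightarrow> lookup (f u) k = (\<Sum>p\<in>keys u. lookup u p * lookup (f (single p 1)) k)"
  by (subst k_linear_eq_lin_ext) (auto simp: lookup_lin_ext)

lemma k_linear_fixes_if_fixes_basis:
  assumes "k_linear \<phi>" "\<And>p. p \<in> keys h \<Longrightarrow> \<phi> (single p 1) = single p 1"
  shows "\<phi> h = h"
proof -
  have "\<phi> h = lin_ext (\<lambda>p. \<phi> (single p 1)) h" by (subst k_linear_eq_lin_ext[OF assms(1)]) simp
  also have "\<dots> = lin_ext (\<lambda>p. single p 1) h"
    unfolding lin_ext_def by (intro sum.cong refl) (simp add: assms(2))
  finally show ?thesis by (simp add: lin_ext_single_one)
qed

lemma k_linear_inv:
  assumes "k_linear f" "bij f"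
  shows "k_linear (inv_into UNIV f)"
proof -
  have f_inv: "f (inv_into UNIV f x) = x" for x using assms(2) by (simp add: bij_def surj_f_inv_f)
  have inv_f: "inv_into UNIV f (f x) = x" for x using assms(2) by (simp add: bij_def)
  have "inv_into UNIV f (u + v) = inv_into UNIV f u + inv_into UNIV f v" for u v
    using assms(1) unfolding k_linear_def by (metis f_inv inv_f)
  moreover have "inv_into UNIV f (smul c v) = smul c (inv_into UNIV f v)" for c v
    using assms(1) unfolding k_linear_def by (metis f_inv inv_f)
  ultimately show ?thesis by (simp add: k_linear_def)
qed

section \<open>Gaussian binomial coefficients\<close>

text \<open>The q-Pascal rule below is the one that comes out of expanding \<open>(y \<otimes> x + 1 \<otimes> y)\<^sup>m\<close>.
  The q-integer \<open>[m]\<^sub>q\<close> is \<open>qbinom q m 1\<close>, and \<open>qfact q m = [m]\<^sub>q!\<close>.\<close>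

fun qbinom :: "'k::field \<Rightarrow> nat \<Rightarrow> nat \<Rightarrow> 'k" where
  "qbinom q 0 i = (if i = 0 then 1 else 0)"
| "qbinom q (Suc m) i = qbinom q m i + (if i = 0 then 0 else q ^ (m + 1 - i) * qbinom q m (i - 1))"

lemma qbinom_eq_0: "m < i \<Longrightarrow> qbinom q m i = 0"
  by (induction m arbitrary: i) auto

lemma qbinom_0_right [simp]: "qbinom q m 0 = 1"
  by (induction m) auto

lemma qbinom_self [simp]: "qbinom q m m = 1"
  by (induction m) (auto simp: qbinom_eq_0)

lemma qbinom_1: "(1 - q) * qbinom q m 1 = 1 - q ^ m"
proof (induction m)
  case (Suc m)
  have "(1 - q) * qbinom q (Suc m) 1 = (1 - q) * qbinom q m 1 + (1 - q) * q ^ m"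
    by (simp add: algebra_simps)
  also have "\<dots> = 1 - q ^ m + (1 - q) * q ^ m" using Suc.IH by simp
  also have "\<dots> = 1 - q ^ Suc m" by (simp add: algebra_simps)
  finally show ?case .
qed simp

lemma qbinom_1_nonzero:
  assumes "\<forall>n::nat. n > 0 \<longrightarrow> q ^ n \<noteq> 1" "m > 0"
  shows "qbinom q m 1 \<noteq> 0"
  using qbinom_1[of q m] assms by auto

lemma qbinom_1_add:
  assumes "q \<noteq> 1"
  shows "qbinom q a 1 + q ^ a * qbinom q b 1 = qbinom q (a + b) 1"
proof -
  have "(1 - q) * (qbinom q a 1 + q ^ a * qbinom q b 1)
      = (1 - q) * qbinom q a 1 + q ^ a * ((1 - q) * qbinom q b 1)"
    by (simp add: algebra_simps)
  also have "\<dots> = (1 - q ^ a) + q ^ a * (1 - q ^ b)" by (simp only: qbinom_1)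
  also have "\<dots> = 1 - q ^ (a + b)" by (simp add: algebra_simps power_add)
  also have "\<dots> = (1 - q) * qbinom q (a + b) 1" by (simp only: qbinom_1)
  finally show ?thesis using assms by simp
qed

fun qfact :: "'k::field \<Rightarrow> nat \<Rightarrow> 'k" where
  "qfact q 0 = 1"
| "qfact q (Suc m) = qfact q m * qbinom q (Suc m) 1"

lemma qfact_nonzero:
  assumes "\<forall>n::nat. n > 0 \<longrightarrow> q ^ n \<noteq> 1"
  shows "qfact q m \<noteq> 0"
proof (induction m)
  case (Suc m)
  have "qbinom q (Suc m) 1 \<noteq> 0" by (rule qbinom_1_nonzero[OF assms]) simp
  with Suc.IH show ?case by (simp only: qfact.simps mult_eq_0_iff) simp
qed simp

lemma qbinom_qfact:
  assumes "q \<noteq> 1" "i \<le> m"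
  shows "qbinom q m i * qfact q i * qfact q (m - i) = qfact q m"
  using assms(2)
proof (induction m arbitrary: i)
  case (Suc m)
  consider "i = 0" | "i = Suc m" | "0 < i" "i \<le> m"
    using Suc.prems by (cases "i = 0"; cases "i = Suc m") auto
  then show ?case
  proof cases
    case 3
    then obtain k where "i = Suc k" by (cases i) auto
    have first: "qbinom q m i * qfact q i * qfact q (Suc m - i) = qfact q m * qbinom q (Suc m - i) 1"
      using Suc.IH[of i] 3 by (simp add: Suc_diff_le) (metis mult.commute mult.left_commute)
    have second: "qbinom q m k * qfact q i * qfact q (Suc m - i) = qfact q m * qbinom q i 1"
      using Suc.IH[of k] 3 \<open>i = Suc k\<close> by simp (metis mult.commute mult.left_commute)
    have "qbinom q (Suc m) i * qfact q i * qfact q (Suc m - i) =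
        qbinom q m i * qfact q i * qfact q (Suc m - i)
        + q ^ (Suc m - i) * (qbinom q m k * qfact q i * qfact q (Suc m - i))"
      using \<open>i = Suc k\<close> by (simp add: algebra_simps)
    also have "\<dots> = qfact q m * (qbinom q (Suc m - i) 1 + q ^ (Suc m - i) * qbinom q i 1)"
      by (simp only: first second) (simp add: algebra_simps)
    also have "\<dots> = qfact q m * qbinom q (Suc m) 1"
      using qbinom_1_add[OF assms(1), of "Suc m - i" i] 3 by simp
    finally show ?thesis by simp
  qed (simp_all add: qbinom_eq_0)
qed simp

section \<open>Tensors and the comultiplication\<close>

lemma lookup_tens: "lookup (tens a b) (p, r) = lookup a p * lookup b r"
proof -
  have "lookup (tens a b) (p, r) = (\<Sum>p'\<in>keys a. \<Sum>r'\<in>keys b.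
      if p' = p \<and> r' = r then lookup a p' * lookup b r' else 0)"
    unfolding tens_def lookup_sum lookup_single when_def by (intro sum.cong) auto
  also have "\<dots> = (\<Sum>p'\<in>keys a. if p' = p then lookup a p' * lookup b r else 0)"
    by (intro sum.cong refl) (cases "r \<in> keys b", auto simp: in_keys_iff if_distrib cong: if_cong)
  also have "\<dots> = lookup a p * lookup b r"
    by (cases "p \<in> keys a") (auto simp: in_keys_iff)
  finally show ?thesis .
qed

lemma tensor_map_eq_lin_ext:
  "tensor_map f g = lin_ext (\<lambda>pr. tens (f (single (fst pr) 1)) (g (single (snd pr) 1)))"
  by (intro ext) (simp only: tensor_map_def lin_ext_def)

lemma k_linear_tensor_map: "k_linear (tensor_map f g)"
  by (simp add: tensor_map_eq_lin_ext k_linear_lin_ext)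

lemma tensor_map_tens:
  assumes f: "k_linear f" and g: "k_linear g"
  shows "tensor_map f g (tens u v) = tens (f u) (g v)"
proof (rule poly_mapping_eqI, clarify)
  fix k1 k2
  have keys_tens: "keys (tens u v) \<subseteq> keys u \<times> keys v"
    by (auto simp: in_keys_iff lookup_tens)
  have "lookup (tensor_map f g (tens u v)) (k1, k2) = (\<Sum>(p, r)\<in>keys u \<times> keys v.
      (lookup u p * lookup (f (single p 1)) k1) * (lookup v r * lookup (g (single r 1)) k2))"
    unfolding tensor_map_eq_lin_ext lookup_lin_ext_superset[OF _ keys_tens, simplified]
    by (intro sum.cong refl) (auto simp: lookup_tens)
  also have "\<dots> = lookup (f u) k1 * lookup (g v) k2"
    unfolding lookup_k_linear[OF f, of u k1] lookup_k_linear[OF g, of v k2]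
    by (simp only: sum_product sum.cartesian_product)
  finally show "lookup (tensor_map f g (tens u v)) (k1, k2) = lookup (tens (f u) (g v)) (k1, k2)"
    by (simp add: lookup_tens)
qed

lemma tensor_map_comp:
  assumes "k_linear f" "k_linear g"
  shows "tensor_map f f (tensor_map g g t) = tensor_map (f \<circ> g) (f \<circ> g) t"
proof -
  have "tensor_map f f (tensor_map g g t)
      = lin_ext (tensor_map f f \<circ> (\<lambda>pr. tens (g (single (fst pr) 1)) (g (single (snd pr) 1)))) t"
    unfolding tensor_map_eq_lin_ext[of g g] by (rule k_linear_comp_lin_ext[OF k_linear_tensor_map])
  also have "\<dots> = tensor_map (f \<circ> g) (f \<circ> g) t"
    unfolding tensor_map_eq_lin_ext[of "f \<circ> g" "f \<circ> g"]
    by (simp only: comp_def tensor_map_tens[OF assms(1,1)])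
  finally show ?thesis .
qed

lemma tensor_map_id: "tensor_map id id t = t"
proof -
  have tens_single: "tens (single p 1) (single r 1) = single (p, r) (1::'k::field)" for p r
    by (rule poly_mapping_eqI, clarify) (simp add: lookup_tens lookup_single when_def)
  show ?thesis
    unfolding tensor_map_eq_lin_ext id_apply tens_single prod.collapse by (rule lin_ext_single_one)
qed

lemma tmul_superset:
  assumes "finite A" "keys t \<subseteq> A" "finite B" "keys u \<subseteq> B"
  shows "tmul q t u = (\<Sum>p\<in>A. \<Sum>r\<in>B.
     single (bprod (fst p) (fst r), bprod (snd p) (snd r))
       (lookup t p * lookup u r * bcoef q (fst p) (fst r) * bcoef q (snd p) (snd r)))"
proof -
  have "tmul q t u = (\<Sum>p\<in>A. \<Sum>r\<in>keys u.
     single (bprod (fst p) (fst r), bprod (snd p) (snd r))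
       (lookup t p * lookup u r * bcoef q (fst p) (fst r) * bcoef q (snd p) (snd r)))"
    unfolding tmul_def by (rule sum.mono_neutral_left) (use assms in \<open>auto simp: in_keys_iff\<close>)
  show ?thesis unfolding \<open>tmul q t u = _\<close>
    by (intro sum.cong refl sum.mono_neutral_left) (use assms in \<open>auto simp: in_keys_iff\<close>)
qed

lemma tmul_add_left: "tmul q (t1 + t2) u = tmul q t1 u + tmul q t2 u"
proof -
  let ?A = "keys t1 \<union> keys t2"
  have "keys (t1 + t2) \<subseteq> ?A" by (rule keys_add)
  then show ?thesis
    by (subst (1 2 3) tmul_superset[where A="?A" and B="keys u"])
       (auto simp: lookup_add distrib_right single_add sum.distrib)
qed

lemma tmul_add_right: "tmul q t (u1 + u2) = tmul q t u1 + tmul q t u2"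
proof -
  let ?B = "keys u1 \<union> keys u2"
  have "keys (u1 + u2) \<subseteq> ?B" by (rule keys_add)
  then show ?thesis
    by (subst (1 2 3) tmul_superset[where A="keys t" and B="?B"])
       (auto simp: lookup_add distrib_left distrib_right single_add sum.distrib)
qed

lemma tmul_zero_left [simp]: "tmul q 0 u = 0"
  by (simp add: tmul_def)

lemma tmul_zero_right [simp]: "tmul q t 0 = 0"
  by (simp add: tmul_def)

lemma tmul_sum_left: "tmul q (sum f I) u = (\<Sum>i\<in>I. tmul q (f i) u)"
  by (induction I rule: infinite_finite_induct) (auto simp: tmul_add_left)

lemma tmul_sum_right: "tmul q t (sum f I) = (\<Sum>i\<in>I. tmul q t (f i))"
  by (induction I rule: infinite_finite_induct) (auto simp: tmul_add_right)

lemma tmul_single: "tmul q (single p a) (single r b) =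
   single (bprod (fst p) (fst r), bprod (snd p) (snd r))
     (a * b * bcoef q (fst p) (fst r) * bcoef q (snd p) (snd r))"
  by (subst tmul_superset[where A="{p}" and B="{r}"]) auto

lemma tpow_comul_y: "tpow q comul_y m = (\<Sum>i\<le>m. single ((0, i), (int i, m - i)) (qbinom q m i))"
proof (induction m)
  case (Suc m)
  have nat_diff: "nat (int m - int i) = m - i" for i by simp
  have "tpow q comul_y (Suc m) = tmul q (\<Sum>i\<le>m. single ((0, i), (int i, m - i)) (qbinom q m i)) comul_y"
    using Suc by simp
  also have "\<dots> = (\<Sum>i\<le>m. single ((0, Suc i), (int (Suc i), m - i)) (qbinom q m i * q ^ (m - i)))
      + (\<Sum>i\<le>m. single ((0, i), (int i, Suc m - i)) (qbinom q m i))"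
    unfolding comul_y_def tmul_add_right tmul_sum_left tmul_single
    by (simp add: bprod_def bcoef_def sum.distrib Suc_diff_le add.commute power_int_def nat_diff)
  also have "(\<Sum>i\<le>m. single ((0, Suc i), (int (Suc i), m - i)) (qbinom q m i * q ^ (m - i)))
      = (\<Sum>i\<le>Suc m. single ((0, i), (int i, Suc m - i))
           (if i = 0 then 0 else q ^ (m + 1 - i) * qbinom q m (i - 1)))"
    by (subst sum.atMost_Suc_shift) (simp add: mult.commute)
  also have "(\<Sum>i\<le>m. single ((0, i), (int i, Suc m - i)) (qbinom q m i))
      = (\<Sum>i\<le>Suc m. single ((0, i), (int i, Suc m - i)) (qbinom q m i))"
    by (simp add: qbinom_eq_0)
  finally show ?case
    by (simp add: single_add sum.distrib add.commute)
qed simp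

lemma comul_basis_eq:
  "comul_basis q (n, m) = (\<Sum>i\<le>m. single ((n, i), (n + int i, m - i)) (qbinom q m i))"
  unfolding comul_basis_def tpow_comul_y tmul_sum_right tmul_single
  by (simp add: bprod_def bcoef_def)

lemma comul_eq_lin_ext: "comul q = lin_ext (comul_basis q)"
  by (intro ext) (simp only: comul_def lin_ext_def)

lemma k_linear_comul: "k_linear (comul q)"
  by (simp add: comul_eq_lin_ext k_linear_lin_ext)

lemma comul_mon: "comul q (mon n m) = (\<Sum>i\<le>m. single ((n, i), (n + int i, m - i)) (qbinom q m i))"
  by (simp add: comul_eq_lin_ext mon_def lin_ext_single comul_basis_eq)

lemma lookup_comul:
  "lookup (comul q d) ((a, i), (b, j)) =
     (if b = a + int i then lookup d (a, i + j) * qbinom q (i + j) i else 0)"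
proof -
  have basis: "lookup (comul_basis q p) ((a, i), (b, j)) =
      (if p = (a, i + j) \<and> b = a + int i then qbinom q (i + j) i else 0)" for p
  proof -
    obtain n m where p: "p = (n, m)" by (cases p)
    have "lookup (comul_basis q p) ((a, i), (b, j)) = (\<Sum>i'\<le>m.
        if i' = i then (if a = n \<and> b = n + int i \<and> i + j = m then qbinom q m i else 0) else 0)"
      unfolding p comul_basis_eq lookup_sum lookup_single when_def by (intro sum.cong refl) auto
    then show ?thesis by (auto simp: p)
  qed
  show ?thesis
    unfolding comul_eq_lin_ext lookup_lin_ext basis
    by (cases "(a, i + j) \<in> keys d") (auto simp: in_keys_iff if_distrib cong: if_cong)
qed

lemma lookup_tensor_map_comul_mon:
  "lookup (tensor_map \<phi> \<phi> (comul q (mon n m))) (k1, k2) =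
    (\<Sum>i\<le>m. qbinom q m i * (lookup (\<phi> (mon n i)) k1 * lookup (\<phi> (mon (n + int i) (m - i))) k2))"
  unfolding comul_mon tensor_map_eq_lin_ext k_linear_sum[OF k_linear_lin_ext] lin_ext_single lookup_sum
  by (simp add: lookup_tens mon_def)

lemma counit_superset:
  "finite A \<Longrightarrow> keys w \<subseteq> A \<Longrightarrow> counit w = (\<Sum>p\<in>A. lookup w p * (if snd p = 0 then 1 else 0))"
  unfolding counit_def by (subst sum_keys_superset[symmetric]) (auto intro!: sum.cong)

lemma k_linear_counit:
  "counit (u + w) = counit u + counit w" "counit (smul c v) = c * counit v"
proof -
  let ?A = "keys u \<union> keys w"
  have "keys (u + w) \<subseteq> ?A" by (rule keys_add)
  then show "counit (u + w) = counit u + counit w"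
    by (subst (1 2 3) counit_superset[of ?A]) (auto simp: lookup_add distrib_right sum.distrib)
  have "keys (smul c v) \<subseteq> keys v" by (auto simp: in_keys_iff)
  from counit_superset[OF finite_keys this] counit_superset[OF finite_keys subset_refl, of v]
  show "counit (smul c v) = c * counit v"
    by (simp add: sum_distrib_left mult.assoc)
qed

lemma counit_zero [simp]: "counit 0 = 0"
  by (simp add: counit_def)

lemma counit_sum: "counit (sum f A) = (\<Sum>a\<in>A. counit (f a))"
  by (induction A rule: infinite_finite_induct) (simp_all add: k_linear_counit)

lemma counit_lin_ext: "counit (lin_ext B v) = (\<Sum>p\<in>keys v. lookup v p * counit (B p))"
  unfolding lin_ext_def by (simp add: counit_sum k_linear_counit)

lemma counit_mon: "counit (mon n m) = (if m = 0 then 1 else 0)"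
  by (simp add: counit_def mon_def)

lemma Aut_c_comp: "\<phi> \<in> Aut_c q \<Longrightarrow> \<psi> \<in> Aut_c q \<Longrightarrow> \<phi> \<circ> \<psi> \<in> Aut_c q"
  unfolding Aut_c_def by (auto simp: k_linear_comp bij_comp tensor_map_comp)

lemma Aut_c_id: "id \<in> Aut_c q"
  unfolding Aut_c_def by (auto simp: k_linear_def tensor_map_id)

lemma Aut_c_inv:
  assumes "\<phi> \<in> Aut_c q"
  shows "inv_into UNIV \<phi> \<in> Aut_c q"
proof -
  let ?\<psi> = "inv_into UNIV \<phi>"
  have lin: "k_linear \<phi>" and "bij \<phi>"
    and comul: "\<And>v. comul q (\<phi> v) = tensor_map \<phi> \<phi> (comul q v)"
    and counit: "\<And>v. counit (\<phi> v) = counit v"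
    using assms by (auto simp: Aut_c_def)
  have right_inv: "\<phi> (?\<psi> v) = v" for v using \<open>bij \<phi>\<close> by (simp add: bij_def surj_f_inv_f)
  have left_inv: "?\<psi> \<circ> \<phi> = id" using \<open>bij \<phi>\<close> by (simp add: bij_def)
  have lin_inv: "k_linear ?\<psi>" by (rule k_linear_inv[OF lin \<open>bij \<phi>\<close>])
  have "tensor_map ?\<psi> ?\<psi> (comul q v) = tensor_map ?\<psi> ?\<psi> (comul q (\<phi> (?\<psi> v)))" for v
    by (simp add: right_inv)
  also have "\<dots> v = comul q (?\<psi> v)" for v
    by (simp add: comul tensor_map_comp[OF lin_inv lin] left_inv tensor_map_id)
  finally have "comul q (?\<psi> v) = tensor_map ?\<psi> ?\<psi> (comul q v)" for v by simp
  moreover have "counit (?\<psi> v) = counit v" for v by (metis counit right_inv)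
  ultimately show ?thesis using lin_inv \<open>bij \<phi>\<close> by (simp add: Aut_c_def bij_imp_bij_inv)
qed

lemma Aut_m_comp: "\<phi> \<in> Aut_m q m \<Longrightarrow> \<psi> \<in> Aut_m q m \<Longrightarrow> \<phi> \<circ> \<psi> \<in> Aut_m q m"
  unfolding Aut_m_def by (auto simp: Aut_c_comp)

lemma Aut_m_id: "id \<in> Aut_m q m"
  by (simp add: Aut_m_def Aut_c_id)

lemma Aut_m_inv:
  assumes "\<phi> \<in> Aut_m q m"
  shows "inv_into UNIV \<phi> \<in> Aut_m q m"
proof -
  have "bij \<phi>" using assms by (auto simp: Aut_m_def Aut_c_def)
  then have "inv_into UNIV \<phi> h = h" if "h \<in> Hle m" for h
    using assms that by (auto simp: Aut_m_def bij_def) (metis inv_f_f)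
  then show ?thesis using assms Aut_c_inv by (auto simp: Aut_m_def)
qed

lemma group_Aut_m: "group ((AutG q)\<lparr>carrier := Aut_m q m\<rparr>)"
proof (rule groupI)
  fix \<phi> assume "\<phi> \<in> carrier ((AutG q)\<lparr>carrier := Aut_m q m\<rparr>)"
  then have "inv_into UNIV \<phi> \<in> Aut_m q m" "inv_into UNIV \<phi> \<circ> \<phi> = id"
    using Aut_m_inv[of \<phi>] by (auto simp: Aut_m_def Aut_c_def bij_def)
  then show "\<exists>\<psi>\<in>carrier ((AutG q)\<lparr>carrier := Aut_m q m\<rparr>).
      \<psi> \<otimes>\<^bsub>(AutG q)\<lparr>carrier := Aut_m q m\<rparr>\<^esub> \<phi> = \<one>\<^bsub>(AutG q)\<lparr>carrier := Aut_m q m\<rparr>\<^esub>"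
    by (auto simp: AutG_def)
qed (auto simp: AutG_def Aut_m_comp Aut_m_id o_assoc)

lemma group_seqG: "group (seqG :: (int \<Rightarrow> 'k::field) monoid)"
proof (rule groupI)
  fix \<beta> :: "int \<Rightarrow> 'k"
  show "\<exists>\<gamma>\<in>carrier seqG. \<gamma> \<otimes>\<^bsub>seqG\<^esub> \<beta> = \<one>\<^bsub>seqG\<^esub>"
    by (rule bexI[of _ "\<lambda>n. - \<beta> n"]) (auto simp: seqG_def)
qed (auto simp: seqG_def add.assoc)

lemma Aut_m_antimono: "m \<le> m' \<Longrightarrow> Aut_m q m' \<subseteq> Aut_m q m"
  unfolding Aut_m_def Hle_def by (auto intro: order_trans)

lemma lookup_mon: "lookup (mon n m) (a, i) = (if a = n \<and> i = m then 1 else 0)"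
  by (auto simp: mon_def lookup_single when_def)

lemma Aut_m_fixes: "\<phi> \<in> Aut_m q m \<Longrightarrow> h \<in> Hle m \<Longrightarrow> \<phi> h = h"
  by (simp add: Aut_m_def)

lemma Aut_m_fixes_mon: "\<phi> \<in> Aut_m q m \<Longrightarrow> i \<le> m \<Longrightarrow> \<phi> (mon n i) = mon n i"
  by (simp add: Aut_m_def Hle_def mon_def)

lemma Aut_m_k_linear: "\<phi> \<in> Aut_m q m \<Longrightarrow> k_linear \<phi>"
  by (simp add: Aut_m_def Aut_c_def)

lemma Aut_m_comul: "\<phi> \<in> Aut_m q m \<Longrightarrow> comul q (\<phi> v) = tensor_map \<phi> \<phi> (comul q v)"
  by (simp add: Aut_m_def Aut_c_def)

lemma lookup_tensor_map_comul_mon_Aut_m: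
  fixes n :: int
  assumes \<phi>: "\<phi> \<in> Aut_m q (s - 1)" and s: "s \<ge> 1"
  defines "e \<equiv> lookup (\<phi> (mon n s))"
  shows "lookup (tensor_map \<phi> \<phi> (comul q (mon n s))) ((a, i), (b, j)) =
      (if a = n \<and> i = 0 then e (b, j) else 0) + (if b = n + int s \<and> j = 0 then e (a, i) else 0)
      + (if 0 < i \<and> i < s \<and> a = n \<and> b = n + int i \<and> j = s - i then qbinom q s i else 0)"
proof -
  have ends: "\<phi> (mon n 0) = mon n 0" "\<phi> (mon (n + int s) 0) = mon (n + int s) 0"
    by (auto intro: Aut_m_fixes_mon[OF \<phi>])
  have middle: "qbinom q s i' * (lookup (\<phi> (mon n i')) (a, i)
        * lookup (\<phi> (mon (n + int i') (s - i'))) (b, j))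
      = (if i' = i then (if a = n \<and> b = n + int i \<and> j = s - i then qbinom q s i else 0) else 0)"
    if "i' \<in> {1..<s}" for i'
    using that by (auto simp: Aut_m_fixes_mon[OF \<phi>] lookup_mon)
  show ?thesis
    unfolding lookup_tensor_map_comul_mon sum_atMost_split_ends[OF s]
    by (simp only: sum.cong[OF refl middle]) (simp add: ends lookup_mon e_def)
qed

lemma Aut_m_coeff_identity:
  fixes n :: int
  assumes \<phi>: "\<phi> \<in> Aut_m q (s - 1)" and s: "s \<ge> 1"
  defines "e \<equiv> lookup (\<phi> (mon n s))"
  shows "(if b = a + int i then e (a, i + j) * qbinom q (i + j) i else 0) =
      (if a = n \<and> i = 0 then e (b, j) else 0) + (if b = n + int s \<and> j = 0 then e (a, i) else 0)
      + (if 0 < i \<and> i < s \<and> a = n \<and> b = n + int i \<and> j = s - i then qbinom q s i else 0)"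
proof -
  have "lookup (comul q (\<phi> (mon n s))) ((a, i), (b, j))
      = lookup (tensor_map \<phi> \<phi> (comul q (mon n s))) ((a, i), (b, j))"
    by (simp only: Aut_m_comul[OF \<phi>])
  then show ?thesis
    unfolding lookup_comul lookup_tensor_map_comul_mon_Aut_m[OF \<phi> s] e_def .
qed

definition xdiff :: "int \<Rightarrow> nat \<Rightarrow> 'k::field hopfH" where
  "xdiff n s = mon (n + int s) 0 - mon n 0"

lemma lookup_xdiff:
  "lookup (xdiff n s) (a, c) = (if a = n + int s \<and> c = 0 then 1 else 0) - (if a = n \<and> c = 0 then 1 else 0)"
  by (simp add: xdiff_def lookup_minus lookup_mon)

lemma xdiff_Hle: "xdiff n s \<in> Hle m"
  unfolding Hle_def
proof clarify
  fix a c assume "(a, c) \<in> keys (xdiff n s :: 'k::field hopfH)"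
  then show "snd (a, c) \<le> m" by (auto simp: in_keys_iff lookup_xdiff split: if_splits)
qed

text \<open>In positive y-degree \<open>c\<close> the coefficient identity pins \<open>\<phi>(x\<^sup>ny\<^sup>s)\<close> down: for \<open>c \<ge> 2\<close>
  because \<open>[c]\<^sub>q \<noteq> 0\<close>, and for \<open>c = 1\<close> because \<open>s \<ge> 2\<close> leaves no term of degree 1 on the right.\<close>

lemma lookup_Aut_m_mon_pos_degree:
  fixes n :: int and q :: "'k::field"
  assumes \<phi>: "\<phi> \<in> Aut_m q (s - 1)" and s: "s \<ge> 2" and q: "\<forall>n::nat. n > 0 \<longrightarrow> q ^ n \<noteq> 1"
    and c: "c \<ge> 1"
  shows "lookup (\<phi> (mon n s)) (a, c) = (if a = n \<and> c = s then 1 else 0)"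
proof -
  define e where "e = lookup (\<phi> (mon n s))"
  note E = Aut_m_coeff_identity[OF \<phi>, where n=n, folded e_def]
  show ?thesis
  proof (cases "c = 1")
    case True
    have right: "e (a, 1) = (if a + 1 = n + int s then e (a, 1) else 0)"
      using E[where b="a + 1" and a="a" and i="1" and j="0"] s by (simp add: add.commute)
    have left: "e (a, 1) = (if a = n then e (a, 1) else 0)"
      using E[where b="a" and a="a" and i="0" and j="1"] s by simp
    have "a \<noteq> n \<or> a + 1 \<noteq> n + int s" using s by auto
    then have "e (a, 1) = 0" using left right by metis
    then show ?thesis using s True by (simp add: e_def)
  next
    case False
    have "e (a, c) * qbinom q c 1 = (if a = n \<and> c = s then qbinom q s 1 else 0)"
      using E[where b="a + 1" and a="a" and i="1" and j="c - 1"] c s False by (auto simp: add.commute)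
    moreover have "qbinom q c 1 \<noteq> 0" by (rule qbinom_1_nonzero[OF q]) (use c in auto)
    ultimately show ?thesis by (auto simp: e_def split: if_splits)
  qed
qed

text \<open>In degree 0 the instance \<open>i = j = 0\<close> of the coefficient identity leaves only \<open>x\<^sup>n\<close> and
  \<open>x\<^sup>n\<^sup>+\<^sup>s\<close>, and with \<open>b = n + s\<close> it forces their coefficients to cancel.\<close>

lemma Aut_m_mon_eq:
  fixes n :: int and q :: "'k::field"
  assumes \<phi>: "\<phi> \<in> Aut_m q (s - 1)" and s: "s \<ge> 2" and q: "\<forall>n::nat. n > 0 \<longrightarrow> q ^ n \<noteq> 1"
  shows "\<phi> (mon n s) = mon n s + smul (lookup (\<phi> (mon n s)) (n + int s, 0)) (xdiff n s)"
proof (rule poly_mapping_eqI, clarify)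
  fix a :: int and c :: nat
  define e where "e = lookup (\<phi> (mon n s))"
  note E = Aut_m_coeff_identity[OF \<phi>, where n=n, folded e_def]
  have "n + int s \<noteq> n" using s by simp
  show "lookup (\<phi> (mon n s)) (a, c) = lookup (mon n s + smul (e (n + int s, 0)) (xdiff n s)) (a, c)"
  proof (cases "c = 0")
    case True
    have "e (a, 0) = (if a = n then e (a, 0) else 0) + (if a = n + int s then e (a, 0) else 0)"
      using E[where b="a" and a="a" and i="0" and j="0"] s by simp
    moreover have "e (n + int s, 0) + e (n, 0) = 0"
      using E[where b="n + int s" and a="n" and i="0" and j="0"] s by simp
    ultimately have "e (a, 0) =
        (if a = n + int s then e (n + int s, 0) else if a = n then - e (n + int s, 0) else 0)"
      using \<open>n + int s \<noteq> n\<close> by (auto split: if_splits simp: eq_neg_iff_add_eq_0 add.commute)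
    then show ?thesis using True s \<open>n + int s \<noteq> n\<close>
      by (auto simp: e_def lookup_add lookup_xdiff lookup_mon)
  next
    case False
    then show ?thesis
      using s lookup_Aut_m_mon_pos_degree[OF \<phi> s q, of c n a]
      by (simp add: e_def lookup_add lookup_xdiff lookup_mon)
  qed
qed

lemma f_s_eqI:
  assumes "s \<ge> 1" and "\<phi> (mon n s) = mon n s + smul \<beta> (xdiff n s)"
  shows "f_s s \<phi> n = \<beta>"
  unfolding f_s_def
proof (rule the_equality)
  show "\<phi> (mon n s) = mon n s + smul \<beta> (mon (n + int s) 0 - mon n 0)"
    using assms(2) by (simp add: xdiff_def)
next
  fix \<beta>' assume "\<phi> (mon n s) = mon n s + smul \<beta>' (mon (n + int s) 0 - mon n 0)"
  then have "lookup (mon n s + smul \<beta>' (xdiff n s)) (n + int s, 0)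
      = lookup (mon n s + smul \<beta> (xdiff n s)) (n + int s, 0)"
    using assms(2) by (simp add: xdiff_def)
  then show "\<beta>' = \<beta>" using assms(1) by (simp add: lookup_add lookup_mon lookup_xdiff)
qed

lemma Aut_m_mon_f_s:
  fixes q :: "'k::field"
  assumes \<phi>: "\<phi> \<in> Aut_m q (s - 1)" and s: "s \<ge> 2" and q: "\<forall>n::nat. n > 0 \<longrightarrow> q ^ n \<noteq> 1"
  shows "\<phi> (mon n s) = mon n s + smul (f_s s \<phi> n) (xdiff n s)"
proof -
  have "f_s s \<phi> n = lookup (\<phi> (mon n s)) (n + int s, 0)"
    using s Aut_m_mon_eq[OF \<phi> s q, of n] by (intro f_s_eqI) auto
  then show ?thesis using Aut_m_mon_eq[OF \<phi> s q, of n] by simp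
qed

lemma f_s_comp:
  fixes q :: "'k::field"
  assumes \<phi>: "\<phi> \<in> Aut_m q (s - 1)" and \<psi>: "\<psi> \<in> Aut_m q (s - 1)" and s: "s \<ge> 2"
    and q: "\<forall>n::nat. n > 0 \<longrightarrow> q ^ n \<noteq> 1"
  shows "f_s s (\<phi> \<circ> \<psi>) = (\<lambda>n. f_s s \<phi> n + f_s s \<psi> n)"
proof
  fix n
  have "(\<phi> \<circ> \<psi>) (mon n s) = \<phi> (mon n s + smul (f_s s \<psi> n) (xdiff n s))"
    by (simp add: Aut_m_mon_f_s[OF \<psi> s q])
  also have "\<dots> = \<phi> (mon n s) + smul (f_s s \<psi> n) (\<phi> (xdiff n s))"
    using Aut_m_k_linear[OF \<phi>] by (simp add: k_linear_def)
  also have "\<phi> (xdiff n s) = xdiff n s"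
    by (rule Aut_m_fixes[OF \<phi> xdiff_Hle])
  also have "\<phi> (mon n s) + smul (f_s s \<psi> n) (xdiff n s)
      = mon n s + smul (f_s s \<phi> n + f_s s \<psi> n) (xdiff n s)"
    by (simp add: Aut_m_mon_f_s[OF \<phi> s q] add.assoc smul_add_left)
  finally show "f_s s (\<phi> \<circ> \<psi>) n = f_s s \<phi> n + f_s s \<psi> n"
    by (rule f_s_eqI[rotated]) (use s in auto)
qed

lemma group_hom_f_s:
  fixes q :: "'k::field"
  assumes "s \<ge> 2" and "\<forall>n::nat. n > 0 \<longrightarrow> q ^ n \<noteq> 1"
  shows "group_hom ((AutG q)\<lparr>carrier := Aut_m q (s - 1)\<rparr>) seqG (f_s s)"
proof (rule group_hom.intro[OF group_Aut_m group_seqG])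
  show "group_hom_axioms ((AutG q)\<lparr>carrier := Aut_m q (s - 1)\<rparr>) seqG (f_s s)"
    by (rule group_hom_axioms.intro, rule homI) (auto simp: seqG_def AutG_def f_s_comp[OF _ _ assms])
qed

lemma kernel_f_s:
  fixes q :: "'k::field"
  assumes s: "s \<ge> 2" and q: "\<forall>n::nat. n > 0 \<longrightarrow> q ^ n \<noteq> 1"
  shows "kernel ((AutG q)\<lparr>carrier := Aut_m q (s - 1)\<rparr>) seqG (f_s s) = Aut_m q s"
proof (rule equalityI[OF subsetI subsetI])
  fix \<phi> assume "\<phi> \<in> kernel ((AutG q)\<lparr>carrier := Aut_m q (s - 1)\<rparr>) seqG (f_s s)"
  then have \<phi>: "\<phi> \<in> Aut_m q (s - 1)" and f_s_0: "f_s s \<phi> = (\<lambda>n. 0)"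
    by (auto simp: kernel_def seqG_def)
  have "\<phi> h = h" if h: "h \<in> Hle s" for h
  proof (rule k_linear_fixes_if_fixes_basis[OF Aut_m_k_linear[OF \<phi>]])
    fix p assume "p \<in> keys h"
    then obtain a c where p: "p = (a, c)" "c \<le> s" using h by (cases p) (auto simp: Hle_def)
    then have "\<phi> (mon a c) = mon a c"
      using Aut_m_mon_f_s[OF \<phi> s q, of a] f_s_0 Aut_m_fixes_mon[OF \<phi>, of c a]
      by (cases "c = s") auto
    then show "\<phi> (single p 1) = single p 1" by (simp add: p mon_def)
  qed
  then show "\<phi> \<in> Aut_m q s" using \<phi> by (auto simp: Aut_m_def)
next
  fix \<phi> assume \<phi>: "\<phi> \<in> Aut_m q s"
  then have "f_s s \<phi> n = 0" for n
    using s Aut_m_fixes_mon[OF \<phi>, of s n] by (intro f_s_eqI) auto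
  moreover have "\<phi> \<in> Aut_m q (s - 1)" using \<phi> Aut_m_antimono[of "s - 1" s q] by auto
  ultimately show "\<phi> \<in> kernel ((AutG q)\<lparr>carrier := Aut_m q (s - 1)\<rparr>) seqG (f_s s)"
    by (auto simp: kernel_def seqG_def)
qed

section \<open>Surjectivity of \<open>f_s\<close>\<close>

definition unitri :: "nat \<Rightarrow> (int \<Rightarrow> 'k::field) \<Rightarrow> int \<Rightarrow> int \<Rightarrow> 'k" where
  "unitri s \<gamma> x y = (if y = x then 1 else 0) + (if y = x + int s then \<gamma> x else 0)"

text \<open>Under this condition \<open>unitri s \<gamma>\<close> and \<open>unitri s (- \<gamma>)\<close> are inverse matrices.\<close>

definition square_zero :: "nat \<Rightarrow> (int \<Rightarrow> 'k::field) \<Rightarrow> bool" where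
  "square_zero s \<gamma> \<longleftrightarrow> (\<forall>a. \<gamma> a * \<gamma> (a + int s) = 0)"

lemma unitri_nonzero: "unitri s \<gamma> x y \<noteq> 0 \<Longrightarrow> y = x \<or> y = x + int s"
  by (auto simp: unitri_def split: if_splits)

lemma square_zero_uminus: "square_zero s \<gamma> \<Longrightarrow> square_zero s (\<lambda>z. - \<gamma> z)"
  by (simp add: square_zero_def)

text \<open>The window \<open>[n, n + m]\<close> of intermediate indices only needs to contain every index
  where a summand can be nonzero.\<close>

lemma unitri_inverse:
  assumes "square_zero s \<gamma>" "s \<ge> 1" "n \<le> x" "x + int s \<le> n + int m \<or> y \<le> n + int m"
  shows "(\<Sum>i\<le>m. unitri s (\<lambda>z. - \<gamma> z) x (n + int i) * unitri s \<gamma> (n + int i) y)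
    = (if x = y then 1 else 0)"
proof -
  have entry: "unitri s (\<lambda>z. - \<gamma> z) x c * unitri s \<gamma> c y =
      (if c = x then unitri s \<gamma> x y else 0) - \<gamma> x * (if c = x + int s then unitri s \<gamma> (x + int s) y else 0)"
    for c using assms(2) by (auto simp: unitri_def algebra_simps)
  have "(\<Sum>i\<le>m. unitri s (\<lambda>z. - \<gamma> z) x (n + int i) * unitri s \<gamma> (n + int i) y)
      = unitri s \<gamma> x y - \<gamma> x * unitri s \<gamma> (x + int s) y"
    unfolding entry sum_subtractf sum_distrib_left[symmetric] sum_atMost_shift_delta
    using assms(2-4) by (auto simp: unitri_def)
  also have "\<dots> = (if x = y then 1 else 0)"
    using assms(1,2) unfolding square_zero_def unitri_def by (auto simp: algebra_simps)
  finally show ?thesis .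
qed

lemma unitri_inverse':
  assumes "square_zero s \<gamma>" "s \<ge> 1" "n \<le> x" "x + int s \<le> n + int m \<or> y \<le> n + int m"
  shows "(\<Sum>i\<le>m. unitri s \<gamma> x (n + int i) * unitri s (\<lambda>z. - \<gamma> z) (n + int i) y)
    = (if x = y then 1 else 0)"
  using unitri_inverse[OF square_zero_uminus[OF assms(1)] assms(2-4)] by simp

text \<open>In the rescaled basis \<open>e\<^sub>a\<^sub>,\<^sub>b = x\<^sup>ay\<^sup>b\<^sup>-\<^sup>a / [b - a]\<^sub>q!\<close> (\<open>a \<le> b\<close>) the comultiplication is
  \<open>\<Delta>(e\<^sub>a\<^sub>,\<^sub>b) = \<Sum>\<^sub>a\<^sub>\<le>\<^sub>c\<^sub>\<le>\<^sub>b e\<^sub>a\<^sub>,\<^sub>c \<otimes> e\<^sub>c\<^sub>,\<^sub>b\<close>, the incidence coalgebra of \<open>(\<int>, \<le>)\<close>.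
  Conjugating the matrix \<open>(e\<^sub>a\<^sub>,\<^sub>b)\<close> by \<open>T = unitri s \<gamma>\<close>, i.e.
  \<open>e\<^sub>n\<^sub>,\<^sub>b \<mapsto> \<Sum> T\<^sub>n\<^sub>a T\<^sup>-\<^sup>1\<^sub>b\<^sub>'\<^sub>b e\<^sub>a\<^sub>,\<^sub>b\<^sub>'\<close>, is then a coalgebra automorphism.\<close>

definition conj_coeff :: "'k::field \<Rightarrow> nat \<Rightarrow> (int \<Rightarrow> 'k) \<Rightarrow> int \<times> nat \<Rightarrow> int \<times> nat \<Rightarrow> 'k" where
  "conj_coeff q s \<gamma> p r = qfact q (snd p) / qfact q (snd r) * unitri s \<gamma> (fst p) (fst r)
       * unitri s (\<lambda>z. - \<gamma> z) (fst r + int (snd r)) (fst p + int (snd p))"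

lemma conj_coeff_nonzero:
  "conj_coeff q s \<gamma> (n, m) (a, l) \<noteq> 0 \<Longrightarrow> (a = n \<or> a = n + int s) \<and> l \<le> m \<and> n \<le> a"
  unfolding conj_coeff_def by (auto dest!: unitri_nonzero)

lemma finite_conj_coeff_support: "finite {r. conj_coeff q s \<gamma> p r \<noteq> 0}"
proof -
  obtain n m where p: "p = (n, m)" by (cases p)
  have "{r. conj_coeff q s \<gamma> p r \<noteq> 0} \<subseteq> {n, n + int s} \<times> {..m}"
    using conj_coeff_nonzero p by fastforce
  then show ?thesis by (rule finite_subset) auto
qed

definition conj_image :: "'k::field \<Rightarrow> nat \<Rightarrow> (int \<Rightarrow> 'k) \<Rightarrow> int \<times> nat \<Rightarrow> 'k hopfH" where
  "conj_image q s \<gamma> p = Abs_poly_mapping (conj_coeff q s \<gamma> p)"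

definition conj_aut :: "'k::field \<Rightarrow> nat \<Rightarrow> (int \<Rightarrow> 'k) \<Rightarrow> 'k hopfH \<Rightarrow> 'k hopfH" where
  "conj_aut q s \<gamma> = lin_ext (conj_image q s \<gamma>)"

lemma lookup_conj_image: "lookup (conj_image q s \<gamma> p) = conj_coeff q s \<gamma> p"
  unfolding conj_image_def by (rule lookup_Abs_poly_mapping[OF finite_conj_coeff_support])

lemma keys_conj_image: "keys (conj_image q s \<gamma> (n, m)) \<subseteq> {n, n + int s} \<times> {..m}"
  using conj_coeff_nonzero by (fastforce simp: in_keys_iff lookup_conj_image)

lemma conj_aut_mon: "conj_aut q s \<gamma> (mon n m) = conj_image q s \<gamma> (n, m)"
  by (simp add: conj_aut_def mon_def lin_ext_single)

lemma lookup_conj_aut_mon: "lookup (conj_aut q s \<gamma> (mon n m)) r = conj_coeff q s \<gamma> (n, m) r"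
  by (simp add: conj_aut_mon lookup_conj_image)

lemma k_linear_conj_aut: "k_linear (conj_aut q s \<gamma>)"
  by (simp add: conj_aut_def k_linear_lin_ext)

lemma conj_aut_fixes_Hle:
  assumes q: "\<forall>n::nat. n > 0 \<longrightarrow> q ^ n \<noteq> 1" and h: "h \<in> Hle (s - 1)" and s: "s \<ge> 1"
  shows "conj_aut q s \<gamma> h = h"
proof (rule k_linear_fixes_if_fixes_basis[OF k_linear_conj_aut])
  fix p assume "p \<in> keys h"
  then obtain n m where p: "p = (n, m)" "m < s" using h s by (cases p) (auto simp: Hle_def)
  have "conj_coeff q s \<gamma> (n, m) (a, l) = (if a = n \<and> l = m then 1 else 0)" for a l
    using p(2) qfact_nonzero[OF q, of m] by (auto simp: conj_coeff_def unitri_def)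
  then have "conj_aut q s \<gamma> (mon n m) = mon n m"
    by (intro poly_mapping_eqI) (auto simp: lookup_conj_aut_mon lookup_mon)
  then show "conj_aut q s \<gamma> (single p 1) = single p 1" by (simp add: p mon_def)
qed

lemma conj_aut_mon_s:
  assumes q: "\<forall>n::nat. n > 0 \<longrightarrow> q ^ n \<noteq> 1" and s: "s \<ge> 1"
  shows "conj_aut q s \<gamma> (mon n s) = mon n s + smul (qfact q s * \<gamma> n) (xdiff n s)"
proof (rule poly_mapping_eqI, clarify)
  fix a l
  show "lookup (conj_aut q s \<gamma> (mon n s)) (a, l) = lookup (mon n s + smul (qfact q s * \<gamma> n) (xdiff n s)) (a, l)"
    using s qfact_nonzero[OF q, of s] qfact_nonzero[OF q, of l]
    by (auto simp: lookup_conj_aut_mon conj_coeff_def unitri_def lookup_add lookup_mon lookup_xdiff)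
qed

lemma f_s_conj_aut:
  assumes q: "\<forall>n::nat. n > 0 \<longrightarrow> q ^ n \<noteq> 1" and s: "s \<ge> 1"
  shows "f_s s (conj_aut q s \<gamma>) n = qfact q s * \<gamma> n"
  using s conj_aut_mon_s[OF q s] by (rule f_s_eqI)

lemma lookup_tensor_map_conj_aut_comul_mon:
  assumes q: "\<forall>n::nat. n > 0 \<longrightarrow> q ^ n \<noteq> 1"
  shows "lookup (tensor_map (conj_aut q s \<gamma>) (conj_aut q s \<gamma>) (comul q (mon n m))) ((a, i), (b, j))
    = qfact q m / (qfact q i * qfact q j) * unitri s \<gamma> n a * unitri s (\<lambda>z. - \<gamma> z) (b + int j) (n + int m)
      * (\<Sum>i'\<le>m. unitri s (\<lambda>z. - \<gamma> z) (a + int i) (n + int i') * unitri s \<gamma> (n + int i') b)"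
proof -
  have "q \<noteq> 1" using q by (metis power_one_right zero_less_one)
  have "qbinom q m i' * (conj_coeff q s \<gamma> (n, i') (a, i) * conj_coeff q s \<gamma> (n + int i', m - i') (b, j))
      = qfact q m / (qfact q i * qfact q j) * unitri s \<gamma> n a * unitri s (\<lambda>z. - \<gamma> z) (b + int j) (n + int m)
        * (unitri s (\<lambda>z. - \<gamma> z) (a + int i) (n + int i') * unitri s \<gamma> (n + int i') b)"
    if "i' \<in> {..m}" for i'
  proof -
    have "n + int i' + int (m - i') = n + int m" using that by simp
    moreover have "qbinom q m i' * qfact q i' * qfact q (m - i') = qfact q m"
      using qbinom_qfact[OF \<open>q \<noteq> 1\<close>] that by simp
    ultimately show ?thesis
      using qfact_nonzero[OF q, of i] qfact_nonzero[OF q, of j]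
      unfolding conj_coeff_def fst_conv snd_conv by (simp add: field_simps)
  qed
  then show ?thesis
    unfolding lookup_tensor_map_comul_mon lookup_conj_aut_mon sum_distrib_left by (rule sum.cong[OF refl])
qed

lemma lookup_comul_conj_aut_mon:
  assumes q: "\<forall>n::nat. n > 0 \<longrightarrow> q ^ n \<noteq> 1"
  shows "lookup (comul q (conj_aut q s \<gamma> (mon n m))) ((a, i), (b, j)) = (if b = a + int i
      then qfact q m / (qfact q i * qfact q j) * unitri s \<gamma> n a
        * unitri s (\<lambda>z. - \<gamma> z) (a + int i + int j) (n + int m)
      else 0)"
proof -
  have "q \<noteq> 1" using q by (metis power_one_right zero_less_one)
  have qfact_sum: "qbinom q (i + j) i * (qfact q i * qfact q j) = qfact q (i + j)"
    using qbinom_qfact[OF \<open>q \<noteq> 1\<close>, of i "i + j"] by (simp add: mult.assoc)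
  then have "qbinom q (i + j) i \<noteq> 0" using qfact_nonzero[OF q, of "i + j"] by auto
  then have coeff: "qfact q m / qfact q (i + j) * qbinom q (i + j) i = qfact q m / (qfact q i * qfact q j)"
    unfolding qfact_sum[symmetric] by (simp add: field_simps)
  have "lookup (comul q (conj_aut q s \<gamma> (mon n m))) ((a, i), (b, j)) = (if b = a + int i
      then qfact q m / qfact q (i + j) * qbinom q (i + j) i * unitri s \<gamma> n a
        * unitri s (\<lambda>z. - \<gamma> z) (a + int i + int j) (n + int m)
      else 0)"
    by (simp add: lookup_comul lookup_conj_aut_mon conj_coeff_def add.assoc mult.commute mult.left_commute)
  then show ?thesis by (simp only: coeff)
qed

lemma conj_aut_comul_mon:
  assumes "square_zero s \<gamma>" "s \<ge> 1" "\<forall>n::nat. n > 0 \<longrightarrow> q ^ n \<noteq> 1"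
  shows "comul q (conj_aut q s \<gamma> (mon n m))
    = tensor_map (conj_aut q s \<gamma>) (conj_aut q s \<gamma>) (comul q (mon n m))"
proof (rule poly_mapping_eqI, clarify)
  fix a i b j
  show "lookup (comul q (conj_aut q s \<gamma> (mon n m))) ((a, i), (b, j))
    = lookup (tensor_map (conj_aut q s \<gamma>) (conj_aut q s \<gamma>) (comul q (mon n m))) ((a, i), (b, j))"
  proof (cases "unitri s \<gamma> n a = 0 \<or> unitri s (\<lambda>z. - \<gamma> z) (b + int j) (n + int m) = 0")
    case False
    then have "n \<le> a" and "b + int j \<le> n + int m"
      using unitri_nonzero[of s \<gamma> n a] unitri_nonzero[of s "\<lambda>z. - \<gamma> z" "b + int j" "n + int m"] by auto
    then show ?thesis
      unfolding lookup_comul_conj_aut_mon[OF assms(3)] lookup_tensor_map_conj_aut_comul_mon[OF assms(3)]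
      by (subst unitri_inverse[OF assms(1,2)]) auto
  qed (auto simp: lookup_comul_conj_aut_mon[OF assms(3)] lookup_tensor_map_conj_aut_comul_mon[OF assms(3)])
qed

lemma conj_aut_comul:
  assumes "square_zero s \<gamma>" "s \<ge> 1" "\<forall>n::nat. n > 0 \<longrightarrow> q ^ n \<noteq> 1"
  shows "comul q (conj_aut q s \<gamma> v) = tensor_map (conj_aut q s \<gamma>) (conj_aut q s \<gamma>) (comul q v)"
proof -
  have basis: "comul q \<circ> conj_image q s \<gamma> = tensor_map (conj_aut q s \<gamma>) (conj_aut q s \<gamma>) \<circ> comul_basis q"
  proof
    fix p :: "int \<times> nat"
    obtain n m where p: "p = (n, m)" by (cases p)
    show "(comul q \<circ> conj_image q s \<gamma>) p = (tensor_map (conj_aut q s \<gamma>) (conj_aut q s \<gamma>) \<circ> comul_basis q) p"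
      using conj_aut_comul_mon[OF assms, of n m] by (simp add: p conj_aut_mon comul_mon comul_basis_eq)
  qed
  have "comul q (conj_aut q s \<gamma> v) = lin_ext (comul q \<circ> conj_image q s \<gamma>) v"
    unfolding conj_aut_def by (rule k_linear_comp_lin_ext[OF k_linear_comul])
  also have "\<dots> = lin_ext (tensor_map (conj_aut q s \<gamma>) (conj_aut q s \<gamma>) \<circ> comul_basis q) v"
    by (simp only: basis)
  also have "\<dots> = tensor_map (conj_aut q s \<gamma>) (conj_aut q s \<gamma>) (comul q v)"
    unfolding comul_eq_lin_ext by (rule k_linear_comp_lin_ext[OF k_linear_tensor_map, symmetric])
  finally show ?thesis .
qed

lemma conj_aut_counit_mon:
  assumes "square_zero s \<gamma>" "s \<ge> 1"
  shows "counit (conj_aut q s \<gamma> (mon n m)) = counit (mon n m)"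
proof -
  let ?w = "conj_image q s \<gamma> (n, m)"
  let ?I = "(\<lambda>i. (n + int i, 0::nat)) ` {..m}"
  have "counit ?w = (\<Sum>p\<in>keys ?w \<union> ?I. lookup ?w p * (if snd p = 0 then 1 else 0))"
    by (rule counit_superset) auto
  also have "\<dots> = (\<Sum>p\<in>?I. lookup ?w p * (if snd p = 0 then 1 else 0))"
  proof (rule sum.mono_neutral_right)
    show "\<forall>p\<in>keys ?w \<union> ?I - ?I. lookup ?w p * (if snd p = 0 then 1 else 0) = 0"
    proof
      fix p assume p: "p \<in> keys ?w \<union> ?I - ?I"
      obtain a l where al: "p = (a, l)" by (cases p)
      show "lookup ?w p * (if snd p = 0 then 1 else 0) = 0"
      proof (cases "l = 0 \<and> conj_coeff q s \<gamma> (n, m) (a, l) \<noteq> 0")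
        case True
        then have "n \<le> a" "a \<le> n + int m"
          by (auto simp: conj_coeff_def dest!: unitri_nonzero)
        then have "p \<in> ?I" using True al by (auto intro!: image_eqI[where x="nat (a - n)"])
        then show ?thesis using p by simp
      qed (auto simp: al lookup_conj_image)
    qed
  qed auto
  also have "\<dots> = qfact q m * (\<Sum>i\<le>m. unitri s \<gamma> n (n + int i) * unitri s (\<lambda>z. - \<gamma> z) (n + int i) (n + int m))"
    by (subst sum.reindex) (auto simp: inj_on_def lookup_conj_image conj_coeff_def sum_distrib_left mult.assoc)
  also have "\<dots> = counit (mon n m)"
    by (subst unitri_inverse'[OF assms]) (auto simp: counit_mon)
  finally show ?thesis
    unfolding conj_aut_mon .
qed

lemma conj_aut_counit:
  assumes "square_zero s \<gamma>" "s \<ge> 1"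
  shows "counit (conj_aut q s \<gamma> v) = counit v"
proof -
  have "counit (conj_image q s \<gamma> p) = counit (single p 1)" for p
    using conj_aut_counit_mon[OF assms, of q "fst p" "snd p"] unfolding conj_aut_mon prod.collapse
    by (simp add: mon_def)
  then have "counit (conj_aut q s \<gamma> v) = counit (lin_ext (\<lambda>p. single p 1) v)"
    by (simp add: conj_aut_def counit_lin_ext)
  then show ?thesis by (simp add: lin_ext_single_one)
qed

lemma lookup_conj_aut_conj_aut_mon:
  "lookup (conj_aut q s \<gamma> (conj_aut q s \<delta> (mon n m))) (a, l)
    = (\<Sum>i\<le>s. \<Sum>l'\<le>m. conj_coeff q s \<delta> (n, m) (n + int i, l') * conj_coeff q s \<gamma> (n + int i, l') (a, l))"
proof -
  let ?S = "(\<lambda>(i, l'). (n + int i, l')) ` ({..s} \<times> {..m})"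
  have "keys (conj_image q s \<delta> (n, m)) \<subseteq> ?S"
  proof
    fix p assume "p \<in> keys (conj_image q s \<delta> (n, m))"
    then obtain a' l' where p: "p = (a', l')" "a' = n \<or> a' = n + int s" "l' \<le> m"
      using keys_conj_image[of q s \<delta> n m] by blast
    then show "p \<in> ?S"
      by (auto intro!: image_eqI[where x="(if a' = n then 0 else s, l')"])
  qed
  then have "lookup (conj_aut q s \<gamma> (conj_aut q s \<delta> (mon n m))) (a, l)
      = (\<Sum>p\<in>?S. conj_coeff q s \<delta> (n, m) p * conj_coeff q s \<gamma> p (a, l))"
    unfolding conj_aut_mon unfolding conj_aut_def
    by (simp add: lookup_lin_ext_superset[OF _ \<open>keys _ \<subseteq> ?S\<close>] lookup_conj_image)
  then show ?thesis
    by (subst (asm) sum.reindex) (auto simp: inj_on_def sum.cartesian_product' intro!: sum.cong)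
qed

lemma conj_aut_uminus_inverse_mon:
  assumes "square_zero s \<gamma>" "s \<ge> 1" and q: "\<forall>n::nat. n > 0 \<longrightarrow> q ^ n \<noteq> 1"
  shows "conj_aut q s \<gamma> (conj_aut q s (\<lambda>z. - \<gamma> z) (mon n m)) = mon n m"
proof (rule poly_mapping_eqI, clarify)
  fix a l
  let ?U = "unitri s \<gamma>" and ?V = "unitri s (\<lambda>z. - \<gamma> z)"
  have inner: "(\<Sum>l'\<le>m. conj_coeff q s (\<lambda>z. - \<gamma> z) (n, m) (n + int i, l') * conj_coeff q s \<gamma> (n + int i, l') (a, l))
      = qfact q m / qfact q l * (?V n (n + int i) * ?U (n + int i) a) * (if a + int l = n + int m then 1 else 0)"
    for i
  proof -
    have "(\<Sum>l'\<le>m. conj_coeff q s (\<lambda>z. - \<gamma> z) (n, m) (n + int i, l') * conj_coeff q s \<gamma> (n + int i, l') (a, l))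
      = qfact q m / qfact q l * (?V n (n + int i) * ?U (n + int i) a) *
        (\<Sum>l'\<le>m. ?V (a + int l) (n + int i + int l') * ?U (n + int i + int l') (n + int m))"
      unfolding sum_distrib_left
      by (intro sum.cong refl) (simp add: conj_coeff_def field_simps qfact_nonzero[OF q])
    moreover have "n + int i \<le> a" if "?U (n + int i) a \<noteq> 0"
      using unitri_nonzero[OF that] by auto
    ultimately show ?thesis
      by (cases "?U (n + int i) a = 0") (simp_all add: unitri_inverse[OF assms(1,2)])
  qed
  have "lookup (conj_aut q s \<gamma> (conj_aut q s (\<lambda>z. - \<gamma> z) (mon n m))) (a, l)
      = qfact q m / qfact q l * (if a + int l = n + int m then 1 else 0)
        * (\<Sum>i\<le>s. ?V n (n + int i) * ?U (n + int i) a)"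
    unfolding lookup_conj_aut_conj_aut_mon inner
    by (simp add: sum_distrib_left mult.commute mult.left_commute)
  also have "\<dots> = lookup (mon n m) (a, l)"
    using qfact_nonzero[OF q] by (subst unitri_inverse[OF assms(1,2)]) (auto simp: lookup_mon)
  finally show "lookup (conj_aut q s \<gamma> (conj_aut q s (\<lambda>z. - \<gamma> z) (mon n m))) (a, l) = lookup (mon n m) (a, l)" .
qed

lemma conj_aut_uminus_inverse:
  assumes "square_zero s \<gamma>" "s \<ge> 1" "\<forall>n::nat. n > 0 \<longrightarrow> q ^ n \<noteq> 1"
  shows "conj_aut q s \<gamma> \<circ> conj_aut q s (\<lambda>z. - \<gamma> z) = id"
proof
  fix h
  have "(conj_aut q s \<gamma> \<circ> conj_aut q s (\<lambda>z. - \<gamma> z)) h = h"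
  proof (rule k_linear_fixes_if_fixes_basis[OF k_linear_comp[OF k_linear_conj_aut k_linear_conj_aut]])
    fix p :: "int \<times> nat"
    show "(conj_aut q s \<gamma> \<circ> conj_aut q s (\<lambda>z. - \<gamma> z)) (single p 1) = single p 1"
      using conj_aut_uminus_inverse_mon[OF assms, of "fst p" "snd p"] by (simp add: mon_def)
  qed
  then show "(conj_aut q s \<gamma> \<circ> conj_aut q s (\<lambda>z. - \<gamma> z)) h = id h" by simp
qed

lemma conj_aut_in_Aut_m:
  assumes "square_zero s \<gamma>" "s \<ge> 1" "\<forall>n::nat. n > 0 \<longrightarrow> q ^ n \<noteq> 1"
  shows "conj_aut q s \<gamma> \<in> Aut_m q (s - 1)"
proof -
  have "bij (conj_aut q s \<gamma>)"
    using conj_aut_uminus_inverse[OF assms]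
      conj_aut_uminus_inverse[OF square_zero_uminus[OF assms(1)] assms(2,3)]
    by (intro o_bij[where g="conj_aut q s (\<lambda>z. - \<gamma> z)"]) simp_all
  then show ?thesis
    using k_linear_conj_aut conj_aut_comul[OF assms] conj_aut_counit[OF assms(1,2)]
      conj_aut_fixes_Hle[OF assms(3) _ assms(2)]
    by (auto simp: Aut_m_def Aut_c_def)
qed

text \<open>A single \<open>conj_aut\<close> only reaches sequences supported on a set containing no two points at
  distance \<open>s\<close>; splitting \<open>\<int>\<close> into alternating blocks of length \<open>s\<close> writes every sequence as
  a sum of two such.\<close>

lemma f_s_surj:
  fixes q :: "'k::field"
  assumes s: "s \<ge> 2" and q: "\<forall>n::nat. n > 0 \<longrightarrow> q ^ n \<noteq> 1"
  shows "f_s s ` Aut_m q (s - 1) = carrier seqG"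
proof -
  have "\<beta> \<in> f_s s ` Aut_m q (s - 1)" for \<beta> :: "int \<Rightarrow> 'k"
  proof -
    define \<gamma>\<^sub>0 where "\<gamma>\<^sub>0 a = (if even (a div int s) then \<beta> a / qfact q s else 0)" for a
    define \<gamma>\<^sub>1 where "\<gamma>\<^sub>1 a = (if odd (a div int s) then \<beta> a / qfact q s else 0)" for a
    have "(a + int s) div int s = a div int s + 1" for a using s by simp
    then have "square_zero s \<gamma>\<^sub>0" "square_zero s \<gamma>\<^sub>1"
      unfolding square_zero_def \<gamma>\<^sub>0_def \<gamma>\<^sub>1_def by auto
    then have \<gamma>_Aut: "conj_aut q s \<gamma>\<^sub>0 \<in> Aut_m q (s - 1)" "conj_aut q s \<gamma>\<^sub>1 \<in> Aut_m q (s - 1)"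
      and f_s_\<gamma>: "f_s s (conj_aut q s \<gamma>\<^sub>0) = (\<lambda>n. qfact q s * \<gamma>\<^sub>0 n)"
        "f_s s (conj_aut q s \<gamma>\<^sub>1) = (\<lambda>n. qfact q s * \<gamma>\<^sub>1 n)"
      using s conj_aut_in_Aut_m[OF _ _ q] f_s_conj_aut[OF q] by auto
    have "f_s s (conj_aut q s \<gamma>\<^sub>0 \<circ> conj_aut q s \<gamma>\<^sub>1) = \<beta>"
      using f_s_comp[OF \<gamma>_Aut s q] f_s_\<gamma> qfact_nonzero[OF q, of s]
      by (auto simp: \<gamma>\<^sub>0_def \<gamma>\<^sub>1_def)
    moreover have "conj_aut q s \<gamma>\<^sub>0 \<circ> conj_aut q s \<gamma>\<^sub>1 \<in> Aut_m q (s - 1)"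
      using Aut_m_comp \<gamma>_Aut by blast
    ultimately show ?thesis by (metis image_eqI)
  qed
  then show ?thesis by (auto simp: seqG_def)
qed

theorem proposition3p7:
  fixes q :: "'k::field" and s :: nat
  assumes "q \<noteq> 0"
    and "\<forall>n::nat. n > 0 \<longrightarrow> q ^ n \<noteq> 1"
    and "s \<ge> 2"
  shows "group_hom ((AutG q)\<lparr>carrier := Aut_m q (s - 1)\<rparr>) seqG (f_s s)
       \<and> f_s s ` Aut_m q (s - 1) = carrier seqG
       \<and> subgroup (Aut_m q s) ((AutG q)\<lparr>carrier := Aut_m q (s - 1)\<rparr>)
       \<and> kernel ((AutG q)\<lparr>carrier := Aut_m q (s - 1)\<rparr>) seqG (f_s s) = Aut_m q s"
proof -
  have hom: "group_hom ((AutG q)\<lparr>carrier := Aut_m q (s - 1)\<rparr>) seqG (f_s s)"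
    using group_hom_f_s[OF assms(3,2)] .
  have ker: "kernel ((AutG q)\<lparr>carrier := Aut_m q (s - 1)\<rparr>) seqG (f_s s) = Aut_m q s"
    using kernel_f_s[OF assms(3,2)] .
  show ?thesis
    using hom ker f_s_surj[OF assms(3,2)] group_hom.subgroup_kernel[OF hom] by simp
qed

end
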